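(* Let $n_x,n_y,n_z\ge 1$ be integers, $N:=n_xn_yn_z$, and let $f\in[0,1]^N$. Let $\mu_1,\mu_2,\mu_3>0$. Then each of the following two minimization problems has a minimizer, i.e. the infimum is attained at some $(u,s,l)\in\mathbb{R}^N\times\mathbb{R}^N\times\mathbb{R}^N$ with $u+s+l=f$: (a) $\displaystyle \inf_{u,s,l\in\mathbb{R}^N,\ u+s+l=f}\ \Big(\mu_1\|\nabla_{x,z}u\|_{2,1}+\mu_2\|\Delta_z u\|_1+\iota_{[0,1]^N}(u)\Big)+\|\nabla_y s\|_1+\mu_3\|\nabla_{x,y}l\|_{2,1}$; (b) $\displaystyle \inf_{u,s,l\in\mathbb{R}^N,\ u+s+l=f}\ \Big(\mu_1\|\nabla_{x,y,z}u\|_{2,1}+\iota_{[0,1]^N}(u)\Big)+\|\nabla_y s\|_1+\mu_3\|\nabla_{x,y}l\|_{2,1}$.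
   Context: A 3D image of size $n_x\times n_y\times n_z$ is identified with a vector in $\mathbb{R}^N$, $N=n_xn_yn_z$ (column- and slice-wise reshaping). $\otimes$ denotes the Kronecker product and $I_m$ the $m\times m$ identity. For $m\ge1$, $D_m\in\mathbb{R}^{m,m}$ is the forward difference matrix whose $i$-th row, for $i=1,\dots,m-1$, has entry $-1$ in column $i$ and $1$ in column $i+1$ (zeros elsewhere), and whose last row is zero. $D_m^2\in\mathbb{R}^{m,m}$ is the matrix whose first and last rows are zero and whose $i$-th row, for $i=2,\dots,m-1$, has entries $1,-2,1$ in columns $i-1,i,i+1$ (zeros elsewhere). Set $D_x:=I_{n_z}\otimes I_{n_y}\otimes D_{n_x}$, $D_y:=I_{n_z}\otimes D_{n_y}\otimes I_{n_x}$, $D_z:=D_{n_z}\otimes I_{n_y}\otimes I_{n_x}$, $D_{zz}:=D^2_{n_z}\otimes I_{n_y}\otimes I_{n_x}$, and define $\nabla_y:=D_y$, $\Delta_z:=D_{zz}$, and the stacked operators $\nabla_{x,z}:=\begin{pmatrix}D_x\\ D_z\end{pmatrix}$, $\nabla_{x,y}:=\begin{pmatrix}D_x\\ D_y\end{pmatrix}$, $\nabla_{x,y,z}:=\begin{pmatrix}D_x\\ D_y\\ D_z\end{pmatrix}$. For $w\in\mathbb{R}^{dN}$ the grouped norm is $\|w\|_{2,1}:=\sum_{i=1}^N\big(\sum_{j=0}^{d-1}w_{i+jN}^2\big)^{1/2}$; $\|\cdot\|_1$ is the usual $\ell_1$ norm. For a set $\mathcal{C}$, $\iota_{\mathcal{C}}(u)=0$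 if $u\in\mathcal{C}$ and $+\infty$ otherwise. *)

theory Defs
  imports "HOL-Analysis.Analysis" "HOL-Library.Extended_Real"
begin

text \<open>A 3D image of size nx x ny x nz is a vector in R^N, N = nx*ny*nz, represented as a
  function nat => real of which only the entries 0..N-1 matter (0-based indexing).
  Pixel (i,j,k) (0-based) sits at position p = i + nx*j + nx*ny*k (column- and slice-wise
  reshaping). The Kronecker operators below are written out entrywise.\<close>

definition Dx :: "nat \<Rightarrow> nat \<Rightarrow> nat \<Rightarrow> (nat \<Rightarrow> real) \<Rightarrow> (nat \<Rightarrow> real)" where
  "Dx nx ny nz v p = (if p mod nx + 1 < nx then v (p + 1) - v p else 0)"

definition Dy :: "nat \<Rightarrow> nat \<Rightarrow> nat \<Rightarrow> (nat \<Rightarrow> real) \<Rightarrow> (nat \<Rightarrow> real)" where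
  "Dy nx ny nz v p = (if (p div nx) mod ny + 1 < ny then v (p + nx) - v p else 0)"

definition Dz :: "nat \<Rightarrow> nat \<Rightarrow> nat \<Rightarrow> (nat \<Rightarrow> real) \<Rightarrow> (nat \<Rightarrow> real)" where
  "Dz nx ny nz v p = (if p div (nx * ny) + 1 < nz then v (p + nx * ny) - v p else 0)"

definition Dzz :: "nat \<Rightarrow> nat \<Rightarrow> nat \<Rightarrow> (nat \<Rightarrow> real) \<Rightarrow> (nat \<Rightarrow> real)" where
  "Dzz nx ny nz v p =
     (if 0 < p div (nx * ny) \<and> p div (nx * ny) + 1 < nz
      then v (p - nx * ny) - 2 * v p + v (p + nx * ny) else 0)"

definition norm21 :: "nat \<Rightarrow> (nat \<Rightarrow> real) list \<Rightarrow> real" where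
  "norm21 N ws = (\<Sum>i<N. sqrt (\<Sum>w\<leftarrow>ws. (w i)\<^sup>2))"

definition norm1 :: "nat \<Rightarrow> (nat \<Rightarrow> real) \<Rightarrow> real" where
  "norm1 N w = (\<Sum>i<N. \<bar>w i\<bar>)"

definition iota01 :: "nat \<Rightarrow> (nat \<Rightarrow> real) \<Rightarrow> ereal" where
  "iota01 N u = (if \<forall>i<N. 0 \<le> u i \<and> u i \<le> 1 then 0 else \<infinity>)"

definition feasible :: "nat \<Rightarrow> (nat \<Rightarrow> real) \<Rightarrow> ((nat \<Rightarrow> real) \<times> (nat \<Rightarrow> real) \<times> (nat \<Rightarrow> real)) set" where
  "feasible N f = {(u, s, l). \<forall>i<N. u i + s i + l i = f i}"

definition objA :: "nat \<Rightarrow> nat \<Rightarrow> nat \<Rightarrow> real \<Rightarrow> real \<Rightarrow> real \<Rightarrow>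
    (nat \<Rightarrow> real) \<Rightarrow> (nat \<Rightarrow> real) \<Rightarrow> (nat \<Rightarrow> real) \<Rightarrow> ereal" where
  "objA nx ny nz \<mu>1 \<mu>2 \<mu>3 u s l =
     (let N = nx * ny * nz in
      ereal (\<mu>1 * norm21 N [Dx nx ny nz u, Dz nx ny nz u]) + ereal (\<mu>2 * norm1 N (Dzz nx ny nz u))
      + iota01 N u + ereal (norm1 N (Dy nx ny nz s))
      + ereal (\<mu>3 * norm21 N [Dx nx ny nz l, Dy nx ny nz l]))"

definition objB :: "nat \<Rightarrow> nat \<Rightarrow> nat \<Rightarrow> real \<Rightarrow> real \<Rightarrow>
    (nat \<Rightarrow> real) \<Rightarrow> (nat \<Rightarrow> real) \<Rightarrow> (nat \<Rightarrow> real) \<Rightarrow> ereal" where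
  "objB nx ny nz \<mu>1 \<mu>3 u s l =
     (let N = nx * ny * nz in
      ereal (\<mu>1 * norm21 N [Dx nx ny nz u, Dy nx ny nz u, Dz nx ny nz u])
      + iota01 N u + ereal (norm1 N (Dy nx ny nz s))
      + ereal (\<mu>3 * norm21 N [Dx nx ny nz l, Dy nx ny nz l]))"

end

theory Submission
  imports Defs
begin

text \<open>Eliminating s = f - u - l, both objectives become a continuous nonnegative function R(u, l)
  of u in [0,1]^N and l. R is not coercive in l: it does not change when an image that is constant
  on every z-slice (the kernel of nabla_{x,y}, also annihilated by nabla_y) is subtracted from l.
  So l may be normalised to vanish at the corner of each slice, and walking from that corner to any
  pixel along one y-column and one x-row gives the discrete Poincare inequality
  |l| <= ||D_x l||_1 + ||D_y l||_1 <= 2 ||nabla_{x,y} l||_{2,1} <= 2 R / mu_3.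
  Hence on a sublevel set of R both u and l range over a compact box, where R attains its minimum.\<close>

lemma Suc_lt_mult_of_mod_Suc_lt:
  fixes p A M :: nat
  assumes "p < A * M" "p mod A + 1 < A"
  shows "p + 1 < A * M"
  using assms
  by (metis (no_types, lifting) One_nat_def add.right_neutral add_Suc_right linorder_neqE_nat
      mod_add_left_eq mod_less mod_mult_self1_is_0 not_add_less2 not_less_eq)

lemma add_lt_mult_of_div_Suc_lt:
  fixes p A M :: nat
  assumes "0 < A" "p div A + 1 < M"
  shows "p + A < A * M"
  using assms
  by (metis Euclidean_Rings.div_eq_0_iff add_gr_0 bot_nat_0.not_eq_extremum div_add_self2
      div_mult2_eq less_imp_add_positive mult_eq_0_iff)

lemma div_Suc_eq_of_mod_Suc_lt:
  fixes q m :: nat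
  assumes "Suc (q mod m) < m"
  shows "Suc q div m = q div m"
  using assms
  by (simp add: div_Suc mod_Suc)

lemma Dx_step_in_grid:
  fixes p nx ny nz :: nat
  assumes "p < nx * ny * nz" "p mod nx + 1 < nx"
  shows "p + 1 < nx * ny * nz"
  using Suc_lt_mult_of_mod_Suc_lt[of p nx "ny * nz"] assms by (simp add: mult.assoc)

lemma Dy_step_in_grid:
  fixes p nx ny nz :: nat
  assumes "p < nx * ny * nz" "(p div nx) mod ny + 1 < ny"
  shows "p + nx < nx * ny * nz"
proof -
  have nx: "0 < nx"
    using assms(1) by (cases nx) auto
  have "p div nx < ny * nz"
    using assms(1) nx by (simp add: div_less_iff_less_mult ac_simps)
  then have "p div nx + 1 < ny * nz"
    using Suc_lt_mult_of_mod_Suc_lt assms(2) by simp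
  then show ?thesis
    using add_lt_mult_of_div_Suc_lt[OF nx, of p "ny * nz"] by (simp add: mult.assoc)
qed

lemma Dz_step_in_grid:
  fixes p nx ny nz :: nat
  assumes "p < nx * ny * nz" "p div (nx * ny) + 1 < nz"
  shows "p + nx * ny < nx * ny * nz"
  using add_lt_mult_of_div_Suc_lt[of "nx * ny" p nz] assms by (cases "nx * ny") auto

lemma Dx_cong:
  "\<forall>i<nx * ny * nz. a i = b i \<Longrightarrow> p < nx * ny * nz \<Longrightarrow> Dx nx ny nz a p = Dx nx ny nz b p"
  unfolding Dx_def using Dx_step_in_grid[of p nx ny nz] by auto

lemma Dy_cong:
  "\<forall>i<nx * ny * nz. a i = b i \<Longrightarrow> p < nx * ny * nz \<Longrightarrow> Dy nx ny nz a p = Dy nx ny nz b p"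
  unfolding Dy_def using Dy_step_in_grid[of p nx ny nz] by auto

lemma Dz_cong:
  "\<forall>i<nx * ny * nz. a i = b i \<Longrightarrow> p < nx * ny * nz \<Longrightarrow> Dz nx ny nz a p = Dz nx ny nz b p"
  unfolding Dz_def using Dz_step_in_grid[of p nx ny nz] by auto

lemma Dzz_cong:
  "\<forall>i<nx * ny * nz. a i = b i \<Longrightarrow> p < nx * ny * nz \<Longrightarrow> Dzz nx ny nz a p = Dzz nx ny nz b p"
  unfolding Dzz_def using Dz_step_in_grid[of p nx ny nz] by auto

lemma Dy_diff: "Dy nx ny nz (\<lambda>i. a i - b i) p = Dy nx ny nz a p - Dy nx ny nz b p"
  by (simp add: Dy_def)

lemma norm1_cong: "\<forall>i<N. a i = b i \<Longrightarrow> norm1 N a = norm1 N b"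
  unfolding norm1_def by (rule sum.cong) auto

lemma norm21_cong:
  assumes "list_all2 (\<lambda>a b. \<forall>i<N. a i = b i) ws ws'"
  shows "norm21 N ws = norm21 N ws'"
proof -
  have "(\<Sum>w\<leftarrow>ws. (w i)\<^sup>2) = (\<Sum>w\<leftarrow>ws'. (w i)\<^sup>2)" if "i < N" for i
    using assms by (induction rule: list_all2_induct) (simp_all add: that)
  then show ?thesis
    unfolding norm21_def by (intro sum.cong) auto
qed

lemma norm1_nonneg: "0 \<le> norm1 N a"
  unfolding norm1_def by (auto intro: sum_nonneg)

lemma norm21_nonneg: "0 \<le> norm21 N ws"
  unfolding norm21_def by (auto intro!: sum_nonneg sum_list_nonneg)

lemma norm1_le_norm21: "w \<in> set ws \<Longrightarrow> norm1 N w \<le> norm21 N ws"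
  unfolding norm1_def norm21_def
  by (intro sum_mono real_le_rsqrt member_le_sum_list) auto

lemma continuous_on_Dx [continuous_intros]:
  "(\<And>i. continuous_on S (\<lambda>x. h x i)) \<Longrightarrow> continuous_on S (\<lambda>x. Dx nx ny nz (h x) p)"
  unfolding Dx_def by (cases "p mod nx + 1 < nx") (auto intro!: continuous_intros)

lemma continuous_on_Dy [continuous_intros]:
  "(\<And>i. continuous_on S (\<lambda>x. h x i)) \<Longrightarrow> continuous_on S (\<lambda>x. Dy nx ny nz (h x) p)"
  unfolding Dy_def by (cases "(p div nx) mod ny + 1 < ny") (auto intro!: continuous_intros)

lemma continuous_on_Dz [continuous_intros]:
  "(\<And>i. continuous_on S (\<lambda>x. h x i)) \<Longrightarrow> continuous_on S (\<lambda>x. Dz nx ny nz (h x) p)"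
  unfolding Dz_def by (cases "p div (nx * ny) + 1 < nz") (auto intro!: continuous_intros)

lemma continuous_on_Dzz [continuous_intros]:
  "(\<And>i. continuous_on S (\<lambda>x. h x i)) \<Longrightarrow> continuous_on S (\<lambda>x. Dzz nx ny nz (h x) p)"
  unfolding Dzz_def
  by (cases "0 < p div (nx * ny) \<and> p div (nx * ny) + 1 < nz") (auto intro!: continuous_intros)

lemma continuous_on_norm1 [continuous_intros]:
  "(\<And>i. continuous_on S (\<lambda>x. w x i)) \<Longrightarrow> continuous_on S (\<lambda>x. norm1 N (w x))"
  unfolding norm1_def by (auto intro!: continuous_intros)

lemma continuous_on_norm21_2 [continuous_intros]:
  "(\<And>i. continuous_on S (\<lambda>x. a x i)) \<Longrightarrow> (\<And>i. continuous_on S (\<lambda>x. b x i)) \<Longrightarrow>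
    continuous_on S (\<lambda>x. norm21 N [a x, b x])"
  unfolding norm21_def by (auto intro!: continuous_intros)

lemma continuous_on_norm21_3 [continuous_intros]:
  "(\<And>i. continuous_on S (\<lambda>x. a x i)) \<Longrightarrow> (\<And>i. continuous_on S (\<lambda>x. b x i)) \<Longrightarrow>
    (\<And>i. continuous_on S (\<lambda>x. c x i)) \<Longrightarrow> continuous_on S (\<lambda>x. norm21 N [a x, b x, c x])"
  unfolding norm21_def by (auto intro!: continuous_intros)

lemma continuous_on_coordinate [continuous_intros]: "continuous_on S (\<lambda>u. u i :: real)"
  using continuous_on_product_then_coordinatewise[OF continuous_on_id] .

lemma continuous_on_fst_coordinate [continuous_intros]: "continuous_on S (\<lambda>q. fst q i :: real)"
  using continuous_on_product_then_coordinatewise[OF continuous_on_fst[OF continuous_on_id]] .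

lemma continuous_on_snd_coordinate [continuous_intros]: "continuous_on S (\<lambda>q. snd q i :: real)"
  using continuous_on_product_then_coordinatewise[OF continuous_on_snd[OF continuous_on_id]] .

lemma abs_diff_le_norm1_of_steps:
  fixes l D :: "nat \<Rightarrow> real"
  assumes "0 < e"
    and in_grid: "\<And>t. t < j \<Longrightarrow> a + e * t < N"
    and steps: "\<And>t. t < j \<Longrightarrow> D (a + e * t) = l (a + e * t + e) - l (a + e * t)"
  shows "\<bar>l (a + e * j) - l a\<bar> \<le> norm1 N D"
proof -
  have "\<bar>l (a + e * j') - l a\<bar> \<le> (\<Sum>t<j'. \<bar>D (a + e * t)\<bar>)" if "j' \<le> j" for j'
    using that
  proof (induction j')
    case (Suc j')
    then have "l (a + e * Suc j') - l a = D (a + e * j') + (l (a + e * j') - l a)"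
      using steps[of j'] by (simp add: algebra_simps)
    then show ?case
      using Suc by (simp add: abs_triangle_ineq order_trans[OF abs_triangle_ineq])
  qed simp
  also have "(\<Sum>t<j. \<bar>D (a + e * t)\<bar>) = (\<Sum>i\<in>(\<lambda>t. a + e * t) ` {..<j}. \<bar>D i\<bar>)"
    using \<open>0 < e\<close> by (subst sum.reindex) (auto simp: inj_on_def)
  also have "\<dots> \<le> (\<Sum>i<N. \<bar>D i\<bar>)"
    using in_grid by (intro sum_mono2) auto
  finally show ?thesis
    unfolding norm1_def by simp
qed

lemma abs_diff_row_start_le_norm1_Dx:
  fixes l :: "nat \<Rightarrow> real"
  assumes "r < nx" "j < ny" "k < nz"
  shows "\<bar>l (nx * (ny * k + j) + r) - l (nx * (ny * k + j))\<bar> \<le> norm1 (nx * ny * nz) (Dx nx ny nz l)"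
proof -
  have "ny * k + j + 1 \<le> ny * (k + 1)"
    using assms(2) by simp
  also have "\<dots> \<le> ny * nz"
    using assms(3) by (intro mult_le_mono2) simp
  finally have "nx * (ny * k + j) + nx \<le> nx * (ny * nz)"
    by (metis add_mult_distrib2 mult.right_neutral mult_le_mono2)
  then show ?thesis
    using abs_diff_le_norm1_of_steps[of 1 r "nx * (ny * k + j)" "nx * ny * nz" "Dx nx ny nz l" l] assms
    by (simp add: Dx_def mult.assoc)
qed

lemma abs_diff_slice_start_le_norm1_Dy:
  fixes l :: "nat \<Rightarrow> real"
  assumes "j < ny" "k < nz"
  shows "\<bar>l (nx * ny * k + nx * j) - l (nx * ny * k)\<bar> \<le> norm1 (nx * ny * nz) (Dy nx ny nz l)"
proof (cases "nx = 0")
  case False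
  have "ny * k + t + 1 \<le> ny * nz" if "t < j" for t
  proof -
    have "ny * k + t + 1 \<le> ny * (k + 1)"
      using that assms(1) by simp
    also have "\<dots> \<le> ny * nz"
      using assms(2) by (intro mult_le_mono2) simp
    finally show ?thesis .
  qed
  then have "nx * ny * k + nx * t < nx * ny * nz" if "t < j" for t
    using that False mult_le_mono2[of "ny * k + t + 1" "ny * nz" nx]
    by (simp add: algebra_simps)
  moreover have "(nx * ny * k + nx * t) div nx mod ny = t" if "t < j" for t
    using that assms(1) False by (simp add: mult.assoc)
  ultimately show ?thesis
    using abs_diff_le_norm1_of_steps[of nx j "nx * ny * k" "nx * ny * nz" "Dy nx ny nz l" l] assms False
    by (simp add: Dy_def algebra_simps)
qed (simp add: norm1_nonneg)

definition slice_corner :: "nat \<Rightarrow> nat \<Rightarrow> nat \<Rightarrow> nat" where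
  "slice_corner nx ny p = nx * ny * (p div (nx * ny))"

lemma slice_corner_Dx_step:
  assumes "p mod nx + 1 < nx"
  shows "slice_corner nx ny (p + 1) = slice_corner nx ny p"
  using assms unfolding slice_corner_def by (simp add: div_mult2_eq div_Suc_eq_of_mod_Suc_lt)

lemma slice_corner_Dy_step:
  assumes "(p div nx) mod ny + 1 < ny"
  shows "slice_corner nx ny (p + nx) = slice_corner nx ny p"
proof (cases "nx = 0")
  case False
  then have "(p + nx) div nx = Suc (p div nx)"
    by simp
  with assms show ?thesis
    unfolding slice_corner_def by (simp add: div_mult2_eq div_Suc_eq_of_mod_Suc_lt)
qed simp

lemma abs_diff_slice_corner_le:
  fixes l :: "nat \<Rightarrow> real"
  assumes "p < nx * ny * nz"
  shows "\<bar>l p - l (slice_corner nx ny p)\<bar>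
    \<le> norm1 (nx * ny * nz) (Dx nx ny nz l) + norm1 (nx * ny * nz) (Dy nx ny nz l)"
proof -
  define k j r where "k = p div (nx * ny)" and "j = (p div nx) mod ny" and "r = p mod nx"
  have "0 < nx" "0 < ny"
    using assms by (auto intro!: Nat.gr0I)
  then have "k < nz" "j < ny" "r < nx"
    using assms by (auto simp: k_def j_def r_def div_less_iff_less_mult ac_simps)
  have "p div nx = ny * k + j"
    by (simp add: k_def j_def div_mult2_eq)
  then have p: "p = nx * (ny * k + j) + r"
    by (metis r_def div_mult_mod_eq mult.commute)
  have "\<bar>l p - l (slice_corner nx ny p)\<bar>
      \<le> \<bar>l (nx * (ny * k + j) + r) - l (nx * (ny * k + j))\<bar> + \<bar>l (nx * ny * k + nx * j) - l (nx * ny * k)\<bar>"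
  proof -
    have "slice_corner nx ny p = nx * ny * k"
      by (simp add: slice_corner_def k_def)
    moreover have "nx * (ny * k + j) = nx * ny * k + nx * j"
      by (simp add: algebra_simps)
    ultimately show ?thesis
      using p by (metis abs_triangle_ineq diff_add_cancel add_diff_eq)
  qed
  then show ?thesis
    using abs_diff_row_start_le_norm1_Dx[OF \<open>r < nx\<close> \<open>j < ny\<close> \<open>k < nz\<close>, where l = l]
      abs_diff_slice_start_le_norm1_Dy[OF \<open>j < ny\<close> \<open>k < nz\<close>, where l = l and nx = nx] by linarith
qed

text \<open>Zero outside the grid, so that normalised layers lie in a compact subset of \<open>nat \<Rightarrow> real\<close>.\<close>

definition subtract_slice_corner :: "nat \<Rightarrow> nat \<Rightarrow> nat \<Rightarrow> (nat \<Rightarrow> real) \<Rightarrow> nat \<Rightarrow> real" where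
  "subtract_slice_corner nx ny nz l p =
     (if p < nx * ny * nz then l p - l (slice_corner nx ny p) else 0)"

lemma Dx_subtract_slice_corner:
  assumes "p < nx * ny * nz"
  shows "Dx nx ny nz (subtract_slice_corner nx ny nz l) p = Dx nx ny nz l p"
  using assms Dx_step_in_grid[OF assms] slice_corner_Dx_step[of p nx ny]
  by (simp add: Dx_def subtract_slice_corner_def)

lemma Dy_subtract_slice_corner:
  assumes "p < nx * ny * nz"
  shows "Dy nx ny nz (subtract_slice_corner nx ny nz l) p = Dy nx ny nz l p"
  using assms Dy_step_in_grid[OF assms] slice_corner_Dy_step[of p nx ny]
  by (simp add: Dy_def subtract_slice_corner_def)

lemma abs_subtract_slice_corner_le:
  "\<bar>subtract_slice_corner nx ny nz l p\<bar> \<le> 2 * norm21 (nx * ny * nz) [Dx nx ny nz l, Dy nx ny nz l]"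
  using abs_diff_slice_corner_le[of p nx ny nz l] norm21_nonneg[of "nx * ny * nz"]
    norm1_le_norm21[of "Dx nx ny nz l" "[Dx nx ny nz l, Dy nx ny nz l]" "nx * ny * nz"]
    norm1_le_norm21[of "Dy nx ny nz l" "[Dx nx ny nz l, Dy nx ny nz l]" "nx * ny * nz"]
  by (auto simp: subtract_slice_corner_def)

lemma continuous_attains_inf_by_reduction:
  fixes H :: "'a::topological_space \<Rightarrow> real"
  assumes "compact K" "continuous_on K H" "q1 \<in> K"
    and reduce: "\<And>q. q \<in> S \<Longrightarrow> H q \<le> H q1 \<Longrightarrow> \<exists>q'\<in>K. H q' \<le> H q"
  shows "\<exists>q0\<in>K. \<forall>q\<in>S. H q0 \<le> H q"
proof -
  obtain q0 where "q0 \<in> K" and min: "\<And>q. q \<in> K \<Longrightarrow> H q0 \<le> H q"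
    using continuous_attains_inf[OF assms(1) _ assms(2)] assms(3) by blast
  have "H q0 \<le> H q" if "q \<in> S" for q
  proof (cases "H q \<le> H q1")
    case True
    then show ?thesis
      using reduce[OF that] min by force
  next
    case False
    then show ?thesis
      using min[OF assms(3)] by simp
  qed
  with \<open>q0 \<in> K\<close> show ?thesis
    by blast
qed

lemma compact_PiE_truncated_interval:
  "compact (PiE UNIV (\<lambda>i::nat. if i < N then {a..b} else {0::real}))"
proof -
  have "compactin (product_topology (\<lambda>i. euclidean) UNIV)
      (PiE UNIV (\<lambda>i::nat. if i < N then {a..b} else {0::real}))"
    by (subst compactin_PiE) auto
  then show ?thesis
    by (simp add: euclidean_product_topology)
qed

definition reduced_objective ::
    "nat \<Rightarrow> nat \<Rightarrow> nat \<Rightarrow> ((nat \<Rightarrow> real) \<Rightarrow> real) \<Rightarrow> real \<Rightarrow>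
     (nat \<Rightarrow> real) \<Rightarrow> (nat \<Rightarrow> real) \<Rightarrow> (nat \<Rightarrow> real) \<Rightarrow> real" where
  "reduced_objective nx ny nz g c f u l =
     g u + norm1 (nx * ny * nz) (Dy nx ny nz (\<lambda>i. f i - u i - l i))
     + c * norm21 (nx * ny * nz) [Dx nx ny nz l, Dy nx ny nz l]"

lemma reduced_objective_nonneg:
  "(\<And>u. 0 \<le> g u) \<Longrightarrow> 0 \<le> c \<Longrightarrow> 0 \<le> reduced_objective nx ny nz g c f u l"
  unfolding reduced_objective_def by (intro add_nonneg_nonneg mult_nonneg_nonneg norm1_nonneg norm21_nonneg)

lemma continuous_on_reduced_objective:
  assumes "continuous_on UNIV g"
  shows "continuous_on S (\<lambda>q. reduced_objective nx ny nz g c f (fst q) (snd q))"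
proof -
  have "continuous_on S (\<lambda>q. g (fst q))"
    using continuous_on_compose2[OF assms continuous_on_fst[OF continuous_on_id]] by blast
  then show ?thesis
    unfolding reduced_objective_def by (intro continuous_intros)
qed

lemma reduced_objective_truncate_subtract_slice_corner:
  assumes g_local: "\<And>u u'. \<forall>i<nx * ny * nz. u i = u' i \<Longrightarrow> g u = g u'"
  shows "reduced_objective nx ny nz g c f (\<lambda>i. if i < nx * ny * nz then u i else 0)
           (subtract_slice_corner nx ny nz l)
         = reduced_objective nx ny nz g c f u l"
proof -
  let ?N = "nx * ny * nz" and ?u' = "\<lambda>i. if i < nx * ny * nz then u i else 0"
    and ?l' = "subtract_slice_corner nx ny nz l"
  have "\<forall>p<?N. Dy nx ny nz (\<lambda>i. f i - ?u' i - ?l' i) p = Dy nx ny nz (\<lambda>i. f i - u i - l i) p"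
  proof (intro allI impI)
    fix p assume "p < ?N"
    have "Dy nx ny nz (\<lambda>i. f i - ?u' i - ?l' i) p = Dy nx ny nz (\<lambda>i. f i - u i - ?l' i) p"
      using \<open>p < ?N\<close> by (intro Dy_cong) auto
    also have "\<dots> = Dy nx ny nz (\<lambda>i. f i - u i) p - Dy nx ny nz l p"
      using Dy_diff[of nx ny nz "\<lambda>i. f i - u i" ?l' p] Dy_subtract_slice_corner[OF \<open>p < ?N\<close>] by simp
    also have "\<dots> = Dy nx ny nz (\<lambda>i. f i - u i - l i) p"
      using Dy_diff[of nx ny nz "\<lambda>i. f i - u i" l p] by simp
    finally show "Dy nx ny nz (\<lambda>i. f i - ?u' i - ?l' i) p = Dy nx ny nz (\<lambda>i. f i - u i - l i) p" .
  qed
  then have "norm1 ?N (Dy nx ny nz (\<lambda>i. f i - ?u' i - ?l' i)) = norm1 ?N (Dy nx ny nz (\<lambda>i. f i - u i - l i))"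
    by (rule norm1_cong)
  moreover have "norm21 ?N [Dx nx ny nz ?l', Dy nx ny nz ?l'] = norm21 ?N [Dx nx ny nz l, Dy nx ny nz l]"
    by (intro norm21_cong) (simp add: Dx_subtract_slice_corner Dy_subtract_slice_corner)
  moreover have "g ?u' = g u"
    by (intro g_local) simp
  ultimately show ?thesis
    unfolding reduced_objective_def by simp
qed

lemma reduced_objective_normalise_into_box:
  fixes nx ny nz :: nat and g :: "(nat \<Rightarrow> real) \<Rightarrow> real" and c B :: real
  defines "N \<equiv> nx * ny * nz"
  assumes "0 < c" and g_nonneg: "\<And>u. 0 \<le> g u"
    and g_local: "\<And>u u'. \<forall>i<N. u i = u' i \<Longrightarrow> g u = g u'"
    and u_box: "\<forall>i<N. 0 \<le> u i \<and> u i \<le> 1"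
    and below: "reduced_objective nx ny nz g c f u l \<le> c * B / 2"
  shows "\<exists>u' l'. u' \<in> PiE UNIV (\<lambda>i. if i < N then {0..1} else {0}) \<and>
                 l' \<in> PiE UNIV (\<lambda>i. if i < N then {-B..B} else {0}) \<and>
                 reduced_objective nx ny nz g c f u' l' = reduced_objective nx ny nz g c f u l"
proof (intro exI conjI)
  define u' where "u' = (\<lambda>i. if i < N then u i else 0)"
  define l' where "l' = subtract_slice_corner nx ny nz l"
  show "reduced_objective nx ny nz g c f u' l' = reduced_objective nx ny nz g c f u l"
    using reduced_objective_truncate_subtract_slice_corner[where g = g and nx = nx and ny = ny
        and nz = nz, OF g_local[unfolded N_def]]
    by (simp add: u'_def l'_def N_def)
  show "u' \<in> PiE UNIV (\<lambda>i. if i < N then {0..1} else {0})"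
    using u_box by (auto simp: u'_def PiE_iff)
  have "c * norm21 N [Dx nx ny nz l, Dy nx ny nz l] \<le> reduced_objective nx ny nz g c f u l"
    using g_nonneg[of u] norm1_nonneg[of N "Dy nx ny nz (\<lambda>i. f i - u i - l i)"]
    by (simp add: reduced_objective_def N_def)
  then have "c * (2 * norm21 N [Dx nx ny nz l, Dy nx ny nz l]) \<le> c * B"
    using below by (simp add: field_simps)
  then have "2 * norm21 N [Dx nx ny nz l, Dy nx ny nz l] \<le> B"
    using \<open>0 < c\<close> by simp
  then have l'_bound: "\<bar>l' i\<bar> \<le> B" for i
    using abs_subtract_slice_corner_le[of nx ny nz l i] by (simp add: l'_def N_def)
  have "l' i \<in> (if i < N then {-B..B} else {0})" for i
    using l'_bound[of i] by (auto simp: l'_def subtract_slice_corner_def N_def abs_le_iff)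
  then show "l' \<in> PiE UNIV (\<lambda>i. if i < N then {-B..B} else {0})"
    by (simp add: PiE_iff)
qed

lemma reduced_objective_attains_min:
  fixes nx ny nz :: nat and g :: "(nat \<Rightarrow> real) \<Rightarrow> real" and f :: "nat \<Rightarrow> real" and c :: real
  defines "N \<equiv> nx * ny * nz"
  assumes f_box: "\<forall>i<N. 0 \<le> f i \<and> f i \<le> 1" and "0 < c"
    and g_cont: "continuous_on UNIV g" and g_nonneg: "\<And>u. 0 \<le> g u"
    and g_local: "\<And>u u'. \<forall>i<N. u i = u' i \<Longrightarrow> g u = g u'"
  shows "\<exists>u0 l0. (\<forall>i<N. 0 \<le> u0 i \<and> u0 i \<le> 1) \<and>
           (\<forall>u l. (\<forall>i<N. 0 \<le> u i \<and> u i \<le> 1) \<longrightarrow>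
              reduced_objective nx ny nz g c f u0 l0 \<le> reduced_objective nx ny nz g c f u l)"
proof -
  let ?R = "\<lambda>q. reduced_objective nx ny nz g c f (fst q) (snd q)"
  define q1 :: "(nat \<Rightarrow> real) \<times> (nat \<Rightarrow> real)"
    where "q1 = (\<lambda>i. if i < N then f i else 0, \<lambda>_. 0)"
  define B where "B = 2 * ?R q1 / c"
  define K where "K = (PiE UNIV (\<lambda>i. if i < N then {0..1} else {0::real})) \<times>
                      (PiE UNIV (\<lambda>i. if i < N then {-B..B} else {0}))"
  define S :: "((nat \<Rightarrow> real) \<times> (nat \<Rightarrow> real)) set"
    where "S = {u. \<forall>i<N. 0 \<le> u i \<and> u i \<le> 1} \<times> UNIV"
  have "0 \<le> B"
    unfolding B_def using reduced_objective_nonneg[OF g_nonneg] \<open>0 < c\<close> by simp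
  have "compact K"
    unfolding K_def by (intro compact_Times compact_PiE_truncated_interval)
  have "q1 \<in> K"
    unfolding K_def q1_def using f_box \<open>0 \<le> B\<close> by auto
  have "\<exists>q'\<in>K. ?R q' \<le> ?R q" if "q \<in> S" "?R q \<le> ?R q1" for q
  proof -
    obtain u l where q: "q = (u, l)"
      by fastforce
    have u_box: "\<forall>i<N. 0 \<le> u i \<and> u i \<le> 1"
      using that(1) by (simp add: S_def q)
    have below: "reduced_objective nx ny nz g c f u l \<le> c * B / 2"
      using that(2) \<open>0 < c\<close> by (simp add: B_def q)
    obtain u' l' where "(u', l') \<in> K" "?R (u', l') = ?R q"
      using reduced_objective_normalise_into_box[where nx = nx and ny = ny and nz = nz and g = g
          and f = f and u = u and l = l, OF \<open>0 < c\<close> g_nonneg g_local[unfolded N_def]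
          u_box[unfolded N_def] below]
      unfolding K_def N_def q by auto
    then show ?thesis
      by (metis order.refl)
  qed
  then obtain q0 where "q0 \<in> K" and min: "\<forall>q\<in>S. ?R q0 \<le> ?R q"
    using continuous_attains_inf_by_reduction[OF \<open>compact K\<close>
        continuous_on_reduced_objective[OF g_cont] \<open>q1 \<in> K\<close>] by blast
  have u0: "fst q0 \<in> PiE UNIV (\<lambda>i. if i < N then {0..1} else {0})"
    using \<open>q0 \<in> K\<close> by (auto simp: K_def mem_Times_iff)
  have "fst q0 i \<in> {0..1}" if "i < N" for i
    using PiE_mem[OF u0 UNIV_I, of i] that by simp
  then have "\<forall>i<N. 0 \<le> fst q0 i \<and> fst q0 i \<le> 1"
    by simp
  with min show ?thesis
    by (intro exI[of _ "fst q0"] exI[of _ "snd q0"]) (auto simp: S_def)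
qed

lemma split_objective_has_minimizer:
  fixes nx ny nz :: nat and g :: "(nat \<Rightarrow> real) \<Rightarrow> real" and f :: "nat \<Rightarrow> real" and c :: real
    and obj :: "(nat \<Rightarrow> real) \<Rightarrow> (nat \<Rightarrow> real) \<Rightarrow> (nat \<Rightarrow> real) \<Rightarrow> ereal"
  defines "N \<equiv> nx * ny * nz"
  assumes f_box: "\<forall>i<N. 0 \<le> f i \<and> f i \<le> 1" and "0 < c"
    and g_cont: "continuous_on UNIV g" and g_nonneg: "\<And>u. 0 \<le> g u"
    and g_local: "\<And>u u'. \<forall>i<N. u i = u' i \<Longrightarrow> g u = g u'"
    and obj_eq: "\<And>u s l. obj u s l = ereal (g u) + iota01 N u + ereal (norm1 N (Dy nx ny nz s))
                               + ereal (c * norm21 N [Dx nx ny nz l, Dy nx ny nz l])"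
  shows "\<exists>u s l. (u, s, l) \<in> feasible N f \<and>
           obj u s l = (INF (u', s', l') \<in> feasible N f. obj u' s' l')"
proof -
  let ?R = "reduced_objective nx ny nz g c f"
  have obj_feasible: "obj u s l = (if \<forall>i<N. 0 \<le> u i \<and> u i \<le> 1 then ereal (?R u l) else \<infinity>)"
    if "(u, s, l) \<in> feasible N f" for u s l
  proof -
    have "\<forall>i<N. s i = f i - u i - l i"
      using that by (auto simp: feasible_def)
    then have "norm1 N (Dy nx ny nz s) = norm1 N (Dy nx ny nz (\<lambda>i. f i - u i - l i))"
      unfolding N_def by (intro norm1_cong) (auto intro: Dy_cong)
    then show ?thesis
      by (simp add: obj_eq iota01_def reduced_objective_def N_def)
  qed
  obtain u0 l0 where u0_box: "\<forall>i<N. 0 \<le> u0 i \<and> u0 i \<le> 1"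
    and min: "\<And>u l. \<forall>i<N. 0 \<le> u i \<and> u i \<le> 1 \<Longrightarrow> ?R u0 l0 \<le> ?R u l"
    using reduced_objective_attains_min[OF f_box[unfolded N_def] \<open>0 < c\<close> g_cont g_nonneg
        g_local[unfolded N_def]]
    unfolding N_def by blast
  define s0 where "s0 i = f i - u0 i - l0 i" for i
  have feasible0: "(u0, s0, l0) \<in> feasible N f"
    by (simp add: feasible_def s0_def)
  have "obj u0 s0 l0 \<le> obj u s l" if "(u, s, l) \<in> feasible N f" for u s l
    using obj_feasible[OF feasible0] obj_feasible[OF that] u0_box min[of u l] by simp
  then have "obj u0 s0 l0 = (INF (u', s', l') \<in> feasible N f. obj u' s' l')"
    using feasible0 by (intro antisym INF_greatest) (auto intro: INF_lower2)
  with feasible0 show ?thesis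
    by blast
qed

lemma objA_has_minimizer:
  fixes nx ny nz :: nat and f :: "nat \<Rightarrow> real" and \<mu>1 \<mu>2 \<mu>3 :: real
  assumes "\<forall>i < nx * ny * nz. 0 \<le> f i \<and> f i \<le> 1"
    and "0 \<le> \<mu>1" and "0 \<le> \<mu>2" and "0 < \<mu>3"
  shows "\<exists>u s l. (u, s, l) \<in> feasible (nx * ny * nz) f \<and>
           objA nx ny nz \<mu>1 \<mu>2 \<mu>3 u s l =
             (INF (u', s', l') \<in> feasible (nx * ny * nz) f. objA nx ny nz \<mu>1 \<mu>2 \<mu>3 u' s' l')"
proof (rule split_objective_has_minimizer[where c = \<mu>3])
  let ?N = "nx * ny * nz"
  let ?g = "\<lambda>u. \<mu>1 * norm21 ?N [Dx nx ny nz u, Dz nx ny nz u] + \<mu>2 * norm1 ?N (Dzz nx ny nz u)"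
  show "continuous_on UNIV ?g"
    by (intro continuous_intros)
  show "0 \<le> ?g u" for u
    using assms norm1_nonneg norm21_nonneg by (simp add: add_nonneg_nonneg)
  show "?g u = ?g u'" if "\<forall>i<?N. u i = u' i" for u u'
  proof -
    have "norm21 ?N [Dx nx ny nz u, Dz nx ny nz u] = norm21 ?N [Dx nx ny nz u', Dz nx ny nz u']"
      using that by (intro norm21_cong) (auto intro: Dx_cong Dz_cong)
    moreover have "norm1 ?N (Dzz nx ny nz u) = norm1 ?N (Dzz nx ny nz u')"
      using that by (intro norm1_cong) (auto intro: Dzz_cong)
    ultimately show ?thesis
      by simp
  qed
qed (use assms in \<open>simp_all add: objA_def Let_def\<close>)

lemma objB_has_minimizer:
  fixes nx ny nz :: nat and f :: "nat \<Rightarrow> real" and \<mu>1 \<mu>3 :: real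
  assumes "\<forall>i < nx * ny * nz. 0 \<le> f i \<and> f i \<le> 1"
    and "0 \<le> \<mu>1" and "0 < \<mu>3"
  shows "\<exists>u s l. (u, s, l) \<in> feasible (nx * ny * nz) f \<and>
           objB nx ny nz \<mu>1 \<mu>3 u s l =
             (INF (u', s', l') \<in> feasible (nx * ny * nz) f. objB nx ny nz \<mu>1 \<mu>3 u' s' l')"
proof (rule split_objective_has_minimizer[where c = \<mu>3])
  let ?N = "nx * ny * nz"
  let ?g = "\<lambda>u. \<mu>1 * norm21 ?N [Dx nx ny nz u, Dy nx ny nz u, Dz nx ny nz u]"
  show "continuous_on UNIV ?g"
    by (intro continuous_intros)
  show "0 \<le> ?g u" for u
    using assms norm21_nonneg by simp
  show "?g u = ?g u'" if "\<forall>i<?N. u i = u' i" for u u'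
    using that by (intro arg_cong[where f = "(*) \<mu>1"] norm21_cong) (auto intro: Dx_cong Dy_cong Dz_cong)
qed (use assms in \<open>simp_all add: objB_def Let_def\<close>)

theorem proposition1:
  fixes nx ny nz :: nat and f :: "nat \<Rightarrow> real" and \<mu>1 \<mu>2 \<mu>3 :: real
  assumes "nx \<ge> 1" and "ny \<ge> 1" and "nz \<ge> 1"
    and "\<forall>i < nx * ny * nz. 0 \<le> f i \<and> f i \<le> 1"
    and "\<mu>1 > 0" and "\<mu>2 > 0" and "\<mu>3 > 0"
  shows "(\<exists>u s l. (u, s, l) \<in> feasible (nx * ny * nz) f \<and>
            objA nx ny nz \<mu>1 \<mu>2 \<mu>3 u s l =
              (INF (u', s', l') \<in> feasible (nx * ny * nz) f. objA nx ny nz \<mu>1 \<mu>2 \<mu>3 u' s' l'))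
       \<and> (\<exists>u s l. (u, s, l) \<in> feasible (nx * ny * nz) f \<and>
            objB nx ny nz \<mu>1 \<mu>3 u s l =
              (INF (u', s', l') \<in> feasible (nx * ny * nz) f. objB nx ny nz \<mu>1 \<mu>3 u' s' l'))"
  using objA_has_minimizer[OF assms(4)] objB_has_minimizer[OF assms(4)] assms(5-7) by simp

end
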